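(* Let $X$ be a two-sided quaternionic Banach space and let $T\in\mathcal{B}(X)$ be invertible in $\mathcal{B}(X)$ and doubly power-bounded, i.e. $\sup_{n\in\mathbb{Z}}\|T^n\|<\infty$. If $\sigma_S(T)=\{1\}$, then $T=\mathcal{I}$.
   Context: $\mathbb{H}$ denotes the real algebra of quaternions; for $s\in\mathbb{H}$, $\mathrm{Re}(s)$ is its real part and $|s|$ its modulus. $X$ is a two-sided vector space over $\mathbb{H}$ which is a Banach space; $\mathcal{B}(X)$ is the algebra of bounded right $\mathbb{H}$-linear operators on $X$ with identity $\mathcal{I}$ and operator norm; negative powers $T^{-n}$ denote powers of the inverse. For $s\in\mathbb{H}$ put $Q_s(T)=T^2-2\mathrm{Re}(s)T+|s|^2\mathcal{I}$; the $S$-spectrum is $\sigma_S(T)=\{s\in\mathbb{H}: Q_s(T)\text{ is not invertible in }\mathcal{B}(X)\}$. *)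

theory Defs
  imports "HOL-Analysis.Analysis"
begin

datatype quat = Quat (qRe: real) (qI: real) (qJ: real) (qK: real)

definition qadd :: "quat \<Rightarrow> quat \<Rightarrow> quat" where
  "qadd p q = Quat (qRe p + qRe q) (qI p + qI q) (qJ p + qJ q) (qK p + qK q)"

definition qmult :: "quat \<Rightarrow> quat \<Rightarrow> quat" where
  "qmult p q = Quat
     (qRe p * qRe q - qI p * qI q - qJ p * qJ q - qK p * qK q)
     (qRe p * qI q + qI p * qRe q + qJ p * qK q - qK p * qJ q)
     (qRe p * qJ q - qI p * qK q + qJ p * qRe q + qK p * qI q)
     (qRe p * qK q + qI p * qJ q - qJ p * qI q + qK p * qRe q)"

definition qabs :: "quat \<Rightarrow> real" where
  "qabs q = sqrt ((qRe q)\<^sup>2 + (qI q)\<^sup>2 + (qJ q)\<^sup>2 + (qK q)\<^sup>2)"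

definition qreal :: "real \<Rightarrow> quat" where
  "qreal r = Quat r 0 0 0"

text \<open>The carrier is a real Banach space \<open>'a::banach\<close> together with a left scalar
  multiplication \<open>lmul\<close> and a right scalar multiplication \<open>rmul\<close> by quaternions,
  making it a two-sided \<open>\<bbbH>\<close>-vector space whose norm is quaternionic
  (\<open>\<parallel>s x\<parallel> = \<parallel>x s\<parallel> = |s| \<parallel>x\<parallel>\<close>), and whose real structure is the given one.\<close>
definition two_sided_qbanach :: "(quat \<Rightarrow> 'a::banach \<Rightarrow> 'a) \<Rightarrow> ('a \<Rightarrow> quat \<Rightarrow> 'a) \<Rightarrow> bool" where
  "two_sided_qbanach lmul rmul \<longleftrightarrow>
     (\<forall>s x y. lmul s (x + y) = lmul s x + lmul s y) \<and>
     (\<forall>s t x. lmul (qadd s t) x = lmul s x + lmul t x) \<and>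
     (\<forall>s t x. lmul (qmult s t) x = lmul s (lmul t x)) \<and>
     (\<forall>s x y. rmul (x + y) s = rmul x s + rmul y s) \<and>
     (\<forall>s t x. rmul x (qadd s t) = rmul x s + rmul x t) \<and>
     (\<forall>s t x. rmul x (qmult s t) = rmul (rmul x s) t) \<and>
     (\<forall>s t x. rmul (lmul s x) t = lmul s (rmul x t)) \<and>
     (\<forall>r x. lmul (qreal r) x = r *\<^sub>R x) \<and>
     (\<forall>r x. rmul x (qreal r) = r *\<^sub>R x) \<and>
     (\<forall>s x. norm (lmul s x) = qabs s * norm x) \<and>
     (\<forall>s x. norm (rmul x s) = qabs s * norm x)"

definition bounded_right_linear :: "('a::banach \<Rightarrow> quat \<Rightarrow> 'a) \<Rightarrow> ('a \<Rightarrow> 'a) \<Rightarrow> bool" where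
  "bounded_right_linear rmul T \<longleftrightarrow>
     bounded_linear T \<and> (\<forall>x s. T (rmul x s) = rmul (T x) s)"

definition invertible_op :: "('a::banach \<Rightarrow> quat \<Rightarrow> 'a) \<Rightarrow> ('a \<Rightarrow> 'a) \<Rightarrow> bool" where
  "invertible_op rmul T \<longleftrightarrow> bounded_right_linear rmul T \<and>
     (\<exists>S. bounded_right_linear rmul S \<and> T \<circ> S = id \<and> S \<circ> T = id)"

definition op_int_power :: "('a \<Rightarrow> 'a) \<Rightarrow> int \<Rightarrow> ('a \<Rightarrow> 'a)" where
  "op_int_power T n = (if 0 \<le> n then T ^^ nat n else (inv T) ^^ nat (- n))"

definition Qop :: "quat \<Rightarrow> ('a::real_vector \<Rightarrow> 'a) \<Rightarrow> ('a \<Rightarrow> 'a)" where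
  "Qop s T = (\<lambda>x. T (T x) - (2 * qRe s) *\<^sub>R T x + (qabs s)\<^sup>2 *\<^sub>R x)"

definition S_spectrum :: "('a::banach \<Rightarrow> quat \<Rightarrow> 'a) \<Rightarrow> ('a \<Rightarrow> 'a) \<Rightarrow> quat set" where
  "S_spectrum rmul T = {s. \<not> invertible_op rmul (Qop s T)}"

end

theory Submission
  imports Defs "HOL-Complex_Analysis.Complex_Analysis"
begin

(* Restricting the right scalar multiplication to the complex numbers C = R + R i inside H
   makes X a complex normed space on which T is complex linear, and for complex l the
   operator Q_l(T) factors as (T - l)(T - cnj l) = (T - cnj l)(T - l). Hence the S-spectrum
   condition says that T - l is invertible for every complex l /= 1, and the statement
   becomes Gelfand's theorem.

   Put A = T - I. For u /= 0 we have I - u A = -u (T - (1 + 1/u)), so I - u A is invertible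
   for every complex u, and the Neumann series of T and of its inverse bound the inverse by
   M^2 / ||u + 1| - |u||. For a bounded real functional phi with complexification psi, the
   function k u = psi ((I - u A)^-1 x) is entire. The maximum modulus principle on unit discs
   centred on the line Re u = -1/2, where the weight vanishes, shows that k grows at most
   linearly, so k is affine by Liouville; since the weight is 1 on the positive reals, k is
   constant. Comparing u = 0 with u = 1 gives phi (A x) = 0, and Hahn-Banach gives A = 0. *)

section \<open>Norming functionals\<close>

text \<open>Partial linear functionals are represented by their graphs, so that Zorn's lemma applies
  to inclusion of graphs.\<close>
definition norm_dominated_graph :: "('a::real_normed_vector \<times> real) set \<Rightarrow> bool" where
  "norm_dominated_graph G \<longleftrightarrow> (0, 0) \<in> G \<and>
     (\<forall>x a b. (x, a) \<in> G \<longrightarrow> (x, b) \<in> G \<longrightarrow> a = b) \<and>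
     (\<forall>x a. (x, a) \<in> G \<longrightarrow> a \<le> norm x) \<and>
     (\<forall>x a z b r s. (x, a) \<in> G \<longrightarrow> (z, b) \<in> G \<longrightarrow> (r *\<^sub>R x + s *\<^sub>R z, r * a + s * b) \<in> G)"

lemma norm_dominated_graphD:
  assumes "norm_dominated_graph G"
  shows "(0, 0) \<in> G"
    and "(x, a) \<in> G \<Longrightarrow> (x, b) \<in> G \<Longrightarrow> a = b"
    and "(x, a) \<in> G \<Longrightarrow> a \<le> norm x"
    and "(x, a) \<in> G \<Longrightarrow> (z, b) \<in> G \<Longrightarrow> (r *\<^sub>R x + s *\<^sub>R z, r * a + s * b) \<in> G"
  using assms unfolding norm_dominated_graph_def by blast+

lemma norm_dominated_graph_extension_interval:
  assumes G: "norm_dominated_graph G"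
  obtains c where "\<And>d a. (d, a) \<in> G \<Longrightarrow> a - norm (d - x0) \<le> c"
    and "\<And>d a. (d, a) \<in> G \<Longrightarrow> c \<le> norm (d + x0) - a"
proof -
  have key: "a1 - norm (d1 - x0) \<le> norm (d2 + x0) - a2" if "(d1, a1) \<in> G" "(d2, a2) \<in> G"
    for d1 a1 d2 a2
  proof -
    have "a1 + a2 \<le> norm (d1 + d2)"
      using norm_dominated_graphD(3,4)[OF G] that by (metis scaleR_one mult_1)
    also have "\<dots> \<le> norm (d1 - x0) + norm (d2 + x0)"
      using norm_triangle_ineq[of "d1 - x0" "d2 + x0"] by simp
    finally show ?thesis by simp
  qed
  define L where "L = {a - norm (d - x0) | d a. (d, a) \<in> G}"
  have "L \<noteq> {}" using norm_dominated_graphD(1)[OF G] unfolding L_def by blast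
  moreover have "bdd_above L"
    unfolding L_def bdd_above_def using key[OF _ norm_dominated_graphD(1)[OF G]] by fastforce
  ultimately show thesis
    using that[of "Sup L"] key by (auto simp: L_def intro!: cSup_upper cSup_least)
qed

lemma norm_dominated_graph_extension_value:
  assumes G: "norm_dominated_graph G"
  obtains c where "\<And>d a t. (d, a) \<in> G \<Longrightarrow> a + t * c \<le> norm (d + t *\<^sub>R x0)"
proof -
  note lin = norm_dominated_graphD(4)[OF G]
  obtain c where lower: "\<And>d a. (d, a) \<in> G \<Longrightarrow> a - norm (d - x0) \<le> c"
    and upper: "\<And>d a. (d, a) \<in> G \<Longrightarrow> c \<le> norm (d + x0) - a"
    using norm_dominated_graph_extension_interval[OF G] by blast
  have "a + t * c \<le> norm (d + t *\<^sub>R x0)" if "(d, a) \<in> G" for d a t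
  proof (cases t "0 :: real" rule: linorder_cases)
    case less
    define s where "s = - t"
    have s: "s > 0" using less by (simp add: s_def)
    have "(1 / s) * a - norm ((1 / s) *\<^sub>R d - x0) \<le> c"
      using lower[OF lin[OF that that, of "1 / s" 0]] by simp
    then have "s * ((1 / s) * a - norm ((1 / s) *\<^sub>R d - x0)) \<le> s * c"
      using s by (intro mult_left_mono) auto
    moreover have "d + t *\<^sub>R x0 = s *\<^sub>R ((1 / s) *\<^sub>R d - x0)"
      using s by (simp add: s_def algebra_simps)
    ultimately show ?thesis
      using s by (simp add: right_diff_distrib s_def)
  next
    case equal
    then show ?thesis using norm_dominated_graphD(3)[OF G that] by simp
  next
    case greater
    have "c \<le> norm ((1 / t) *\<^sub>R d + x0) - (1 / t) * a"
      using upper[OF lin[OF that that, of "1 / t" 0]] by simp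
    then have "t * c \<le> t * (norm ((1 / t) *\<^sub>R d + x0) - (1 / t) * a)"
      using greater by (intro mult_left_mono) auto
    moreover have "d + t *\<^sub>R x0 = t *\<^sub>R ((1 / t) *\<^sub>R d + x0)"
      using greater by (simp add: algebra_simps)
    ultimately show ?thesis
      using greater by (simp add: right_diff_distrib)
  qed
  then show thesis by (rule that)
qed

lemma norm_dominated_graph_extension:
  assumes G: "norm_dominated_graph G" and x0: "\<forall>a. (x0, a) \<notin> G"
    and c: "\<And>d a t. (d, a) \<in> G \<Longrightarrow> a + t * c \<le> norm (d + t *\<^sub>R x0)"
  shows "norm_dominated_graph {(d + t *\<^sub>R x0, a + t * c) | d a t. (d, a) \<in> G}"
    (is "norm_dominated_graph ?G'")
  unfolding norm_dominated_graph_def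
proof (intro conjI allI impI)
  note lin = norm_dominated_graphD(4)[OF G]
  show "(0, 0) \<in> ?G'"
    using norm_dominated_graphD(1)[OF G] by force
next
  fix x a b assume "(x, a) \<in> ?G'" "(x, b) \<in> ?G'"
  then obtain d1 a1 t1 d2 a2 t2 where h: "x = d1 + t1 *\<^sub>R x0" "a = a1 + t1 * c" "(d1, a1) \<in> G"
    "x = d2 + t2 *\<^sub>R x0" "b = a2 + t2 * c" "(d2, a2) \<in> G"
    by blast
  have t: "t1 = t2"
  proof (rule ccontr)
    assume "t1 \<noteq> t2"
    moreover have "d2 - d1 = (t1 - t2) *\<^sub>R x0"
      using h(1,4) by (simp add: algebra_simps)
    ultimately have "(1 / (t1 - t2)) *\<^sub>R d2 + (- 1 / (t1 - t2)) *\<^sub>R d1 = x0"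
      by (simp add: scaleR_diff_right[symmetric])
    then show False
      using norm_dominated_graphD(4)[OF G h(6) h(3)] x0 by metis
  qed
  then have "d1 = d2" using h by simp
  then show "a = b" using norm_dominated_graphD(2)[OF G] h t by blast
next
  fix x a assume "(x, a) \<in> ?G'"
  then show "a \<le> norm x" using c by blast
next
  fix x a z b r s assume "(x, a) \<in> ?G'" "(z, b) \<in> ?G'"
  then obtain d1 a1 t1 d2 a2 t2 where h: "x = d1 + t1 *\<^sub>R x0" "a = a1 + t1 * c" "(d1, a1) \<in> G"
    "z = d2 + t2 *\<^sub>R x0" "b = a2 + t2 * c" "(d2, a2) \<in> G"
    by blast
  have "r *\<^sub>R x + s *\<^sub>R z = (r *\<^sub>R d1 + s *\<^sub>R d2) + (r * t1 + s * t2) *\<^sub>R x0"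
    "r * a + s * b = (r * a1 + s * a2) + (r * t1 + s * t2) * c"
    using h by (simp_all add: algebra_simps)
  then show "(r *\<^sub>R x + s *\<^sub>R z, r * a + s * b) \<in> ?G'"
    using norm_dominated_graphD(4)[OF G h(3) h(6)] by blast
qed

lemma norm_dominated_graph_extend:
  assumes G: "norm_dominated_graph G" and x0: "\<forall>a. (x0, a) \<notin> G"
  obtains G' where "norm_dominated_graph G'" "G \<subset> G'"
proof -
  obtain c where c: "\<And>d a t. (d, a) \<in> G \<Longrightarrow> a + t * c \<le> norm (d + t *\<^sub>R x0)"
    using norm_dominated_graph_extension_value[OF G] by blast
  define G' where "G' = {(d + t *\<^sub>R x0, a + t * c) | d a t. (d, a) \<in> G}"
  have "G \<subseteq> G'" unfolding G'_def by force
  moreover have "(x0, c) \<in> G'" unfolding G'_def using norm_dominated_graphD(1)[OF G] by force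
  ultimately have "G \<subset> G'" using x0 by blast
  then show thesis
    using that norm_dominated_graph_extension[OF G x0 c] unfolding G'_def by blast
qed

lemma norm_dominated_graph_chain_Union:
  assumes C: "C \<in> chains {G. norm_dominated_graph G}" "C \<noteq> {}"
  shows "norm_dominated_graph (\<Union>C)"
proof -
  have dom: "\<And>G. G \<in> C \<Longrightarrow> norm_dominated_graph G" using chainsD2[OF C(1)] by blast
  have common: "\<exists>G\<in>C. p \<in> G \<and> q \<in> G" if pq: "p \<in> \<Union>C" "q \<in> \<Union>C" for p q
  proof -
    obtain G1 G2 where "G1 \<in> C" "G2 \<in> C" "p \<in> G1" "q \<in> G2" using pq by blast
    moreover have "G1 \<subseteq> G2 \<or> G2 \<subseteq> G1" using chainsD[OF C(1)] calculation(1,2) by blast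
    ultimately show ?thesis by blast
  qed
  show ?thesis
    unfolding norm_dominated_graph_def
  proof (intro conjI allI impI)
    show "(0, 0) \<in> \<Union>C" using C(2) dom norm_dominated_graphD(1) by blast
  next
    fix x a b assume "(x, a) \<in> \<Union>C" "(x, b) \<in> \<Union>C"
    then obtain G where "G \<in> C" "(x, a) \<in> G" "(x, b) \<in> G" using common by blast
    then show "a = b" using dom norm_dominated_graphD(2) by blast
  next
    fix x a assume "(x, a) \<in> \<Union>C"
    then show "a \<le> norm x" using dom norm_dominated_graphD(3) by blast
  next
    fix x a z b r s assume "(x, a) \<in> \<Union>C" "(z, b) \<in> \<Union>C"
    then obtain G where "G \<in> C" "(x, a) \<in> G" "(z, b) \<in> G" using common by blast
    then show "(r *\<^sub>R x + s *\<^sub>R z, r * a + s * b) \<in> \<Union>C"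
      using dom norm_dominated_graphD(4) by blast
  qed
qed

lemma norm_dominated_graph_total_functional:
  assumes G: "norm_dominated_graph G" and total: "\<And>x. \<exists>a. (x, a) \<in> G"
  obtains \<phi> where "bounded_linear \<phi>" "\<And>x. (x, \<phi> x) \<in> G"
proof -
  define \<phi> where "\<phi> x = (THE a. (x, a) \<in> G)" for x
  have graph: "(x, \<phi> x) \<in> G" for x
    unfolding \<phi>_def using total[of x] norm_dominated_graphD(2)[OF G] by (metis theI)
  have eq: "\<phi> x = a" if "(x, a) \<in> G" for x a
    using graph that norm_dominated_graphD(2)[OF G] by blast
  have comb: "\<phi> (r *\<^sub>R x + s *\<^sub>R z) = r * \<phi> x + s * \<phi> z" for r s x z
    by (rule eq, rule norm_dominated_graphD(4)[OF G graph graph])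
  have "bounded_linear \<phi>"
  proof (rule bounded_linear_intro[where K = 1])
    show "\<phi> (x + z) = \<phi> x + \<phi> z" for x z using comb[of 1 x 1 z] by simp
    show "\<phi> (r *\<^sub>R x) = r *\<^sub>R \<phi> x" for r x using comb[of r x 0 x] by simp
    show "norm (\<phi> x) \<le> norm x * 1" for x
      using norm_dominated_graphD(3)[OF G graph, of x] norm_dominated_graphD(3)[OF G graph, of "- x"]
        comb[of "- 1" x 0 x] by simp
  qed
  then show thesis using that graph by blast
qed

lemma norm_dominated_graph_line: "norm_dominated_graph {(t *\<^sub>R y, t * norm y) | t. True}"
  (is "norm_dominated_graph ?line")
  unfolding norm_dominated_graph_def
proof (intro conjI allI impI)
  show "(0, 0) \<in> ?line" by force
next
  fix x a b assume "(x, a) \<in> ?line" "(x, b) \<in> ?line"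
  then obtain t1 t2 where "x = t1 *\<^sub>R y" "a = t1 * norm y" "x = t2 *\<^sub>R y" "b = t2 * norm y"
    by blast
  then show "a = b" by (cases "y = 0") auto
next
  fix x a assume "(x, a) \<in> ?line"
  then show "a \<le> norm x" by (auto intro!: mult_right_mono)
next
  fix x a z b r s assume "(x, a) \<in> ?line" "(z, b) \<in> ?line"
  then obtain t1 t2 where "x = t1 *\<^sub>R y" "a = t1 * norm y" "z = t2 *\<^sub>R y" "b = t2 * norm y"
    by blast
  then show "(r *\<^sub>R x + s *\<^sub>R z, r * a + s * b) \<in> ?line"
    by (intro CollectI exI[of _ "r * t1 + s * t2"]) (simp add: algebra_simps)
qed

lemma exists_norming_functional:
  fixes y :: "'a::real_normed_vector"
  obtains \<phi> :: "'a \<Rightarrow> real" where "bounded_linear \<phi>" "\<phi> y = norm y"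
proof -
  define A where "A = {G. norm_dominated_graph G \<and> (y, norm y) \<in> G}"
  have line: "{(t *\<^sub>R y, t * norm y) | t. True} \<in> A"
    unfolding A_def using norm_dominated_graph_line[of y] by force
  have "\<forall>C\<in>chains A. \<exists>U\<in>A. \<forall>G\<in>C. G \<subseteq> U"
  proof
    fix C assume C: "C \<in> chains A"
    show "\<exists>U\<in>A. \<forall>G\<in>C. G \<subseteq> U"
    proof (cases "C = {}")
      case True
      then show ?thesis using line by blast
    next
      case False
      have "C \<in> chains {G. norm_dominated_graph G}" using C by (auto simp: A_def chains_def)
      then have "\<Union>C \<in> A"
        using norm_dominated_graph_chain_Union False chainsD2[OF C] by (auto simp: A_def)
      then show ?thesis by blast
    qed
  qed
  from Zorn_Lemma2[OF this] obtain G where G: "G \<in> A" and max: "\<forall>G'\<in>A. G \<subseteq> G' \<longrightarrow> G' = G"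
    by blast
  have "\<exists>a. (x, a) \<in> G" for x
  proof (rule ccontr)
    assume "\<nexists>a. (x, a) \<in> G"
    then obtain G' where "norm_dominated_graph G'" "G \<subset> G'"
      using norm_dominated_graph_extend G unfolding A_def by blast
    then show False using max G unfolding A_def by blast
  qed
  then obtain \<phi> where "bounded_linear \<phi>" "\<And>x. (x, \<phi> x) \<in> G"
    using norm_dominated_graph_total_functional G unfolding A_def by blast
  moreover have "\<phi> y = norm y" using G calculation(2) norm_dominated_graphD(2) unfolding A_def by blast
  ultimately show thesis using that by blast
qed

section \<open>Entire functions with a weighted bound\<close>

lemma norm_add_one_diff_norm:
  fixes u :: complex
  shows "(cmod (u + 1) - cmod u) * (cmod (u + 1) + cmod u) = 2 * Re u + 1"
proof -
  have "(cmod (u + 1) - cmod u) * (cmod (u + 1) + cmod u) = (cmod (u + 1))\<^sup>2 - (cmod u)\<^sup>2"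
    by (simp add: algebra_simps power2_eq_square)
  also have "\<dots> = 2 * Re u + 1"
    unfolding cmod_power2 by (simp add: power2_eq_square algebra_simps)
  finally show ?thesis .
qed

lemma norm_circle_square_plus_one:
  fixes u c :: complex
  assumes "cmod (u - c) = 1" "Re c = - 1 / 2"
  shows "cmod ((u - c)\<^sup>2 + 1) = \<bar>2 * Re u + 1\<bar>"
proof -
  define z where "z = u - c"
  have "z * cnj z = 1"
    using assms(1) complex_norm_square[of z] by (simp add: z_def)
  then have "z\<^sup>2 + 1 = z * (z + cnj z)"
    by (simp add: algebra_simps power2_eq_square)
  also have "z + cnj z = of_real (2 * Re u + 1)"
    using assms(2) by (simp add: z_def complex_eq_iff)
  finally show ?thesis
    using assms(1) by (simp only: z_def norm_mult norm_of_real) simp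
qed

lemma entire_bound_near_line:
  fixes k :: "complex \<Rightarrow> complex"
  assumes hol: "k holomorphic_on UNIV"
    and bnd: "\<And>u. cmod (k u) * \<bar>2 * Re u + 1\<bar> \<le> B * (2 * cmod u + 1)" and B: "0 \<le> B"
    and near: "\<bar>2 * Re u0 + 1\<bar> < 1"
  shows "cmod (k u0) \<le> B * (2 * cmod u0 + 4)"
proof -
  text \<open>On the unit circle around the point \<open>c\<close> of the line \<open>Re u = -1/2\<close> nearest to \<open>u0\<close>,
    the factor \<open>q\<close> has modulus \<open>|2 Re u + 1|\<close>, while \<open>|q u0| \<ge> 1\<close>.\<close>
  define c where "c = Complex (- 1 / 2) (Im u0)"
  define q where "q u = (u - c)\<^sup>2 + 1" for u
  have u0c: "cmod (u0 - c) < 1 / 2"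
    using near by (simp add: c_def cmod_def abs_if split: if_splits)
  have max: "cmod (k u0 * q u0) \<le> B * (2 * cmod u0 + 4)"
  proof (rule maximum_modulus_frontier[where S = "cball c 1" and f = "\<lambda>u. k u * q u" and \<xi> = u0])
    show "(\<lambda>u. k u * q u) holomorphic_on interior (cball c 1)"
      unfolding q_def by (intro holomorphic_intros holomorphic_on_subset[OF hol]) auto
    show "continuous_on (closure (cball c 1)) (\<lambda>u. k u * q u)"
      unfolding q_def using holomorphic_on_imp_continuous_on[OF hol]
      by (intro continuous_intros) (auto intro: continuous_on_subset)
    show "u0 \<in> cball c 1" using u0c by (simp add: dist_norm norm_minus_commute)
  next
    fix u assume "u \<in> frontier (cball c 1)"
    then have u1: "cmod (u - c) = 1" by (simp add: dist_norm norm_minus_commute)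
    then have "cmod (k u * q u) \<le> B * (2 * cmod u + 1)"
      using bnd[of u] norm_circle_square_plus_one[OF u1] by (simp add: q_def c_def norm_mult)
    also have "\<dots> \<le> B * (2 * cmod u0 + 4)"
    proof -
      have "cmod u \<le> cmod c + 1" using u1 norm_triangle_ineq2[of u c] by simp
      moreover have "cmod c \<le> cmod u0 + 1 / 2"
        using u0c norm_triangle_ineq2[of c u0] by (simp add: norm_minus_commute)
      ultimately show ?thesis using B by (intro mult_left_mono) auto
    qed
    finally show "cmod (k u * q u) \<le> B * (2 * cmod u0 + 4)" .
  qed simp
  have "q u0 = of_real ((Re u0 + 1 / 2)\<^sup>2 + 1)"
    by (simp add: q_def c_def complex_eq_iff power2_eq_square)
  then have "cmod (q u0) \<ge> 1"
    by (simp only: norm_of_real) simp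
  then have "cmod (k u0) \<le> cmod (k u0 * q u0)"
    by (simp add: norm_mult mult_le_cancel_left1)
  then show ?thesis using max by linarith
qed

lemma entire_linear_growth_of_weighted_bound:
  fixes k :: "complex \<Rightarrow> complex"
  assumes hol: "k holomorphic_on UNIV"
    and bnd: "\<And>u. \<bar>cmod (u + 1) - cmod u\<bar> * cmod (k u) \<le> C"
  shows "cmod (k u0) \<le> C * (2 * cmod u0 + 4)"
proof -
  have C: "0 \<le> C" using bnd[of "- 1 / 2"] by simp
  have weighted: "cmod (k u) * \<bar>2 * Re u + 1\<bar> \<le> C * (2 * cmod u + 1)" for u
  proof -
    have "cmod (k u) * \<bar>2 * Re u + 1\<bar> = \<bar>cmod (u + 1) - cmod u\<bar> * cmod (k u) * (cmod (u + 1) + cmod u)"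
      by (simp flip: norm_add_one_diff_norm add: abs_mult)
    also have "\<dots> \<le> C * (cmod (u + 1) + cmod u)"
      using bnd by (intro mult_right_mono) auto
    also have "\<dots> \<le> C * (2 * cmod u + 1)"
      using C norm_triangle_ineq[of u 1] by (intro mult_left_mono) auto
    finally show ?thesis .
  qed
  show ?thesis
  proof (cases "\<bar>2 * Re u0 + 1\<bar> < 1")
    case True
    then show ?thesis by (rule entire_bound_near_line[OF hol weighted C])
  next
    case False
    then have "cmod (k u0) \<le> cmod (k u0) * \<bar>2 * Re u0 + 1\<bar>"
      by (simp add: mult_le_cancel_left1)
    also have "\<dots> \<le> C * (2 * cmod u0 + 4)"
      using weighted[of u0] mult_left_mono[of "2 * cmod u0 + 1" "2 * cmod u0 + 4" C] C by simp
    finally show ?thesis .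
  qed
qed

lemma entire_constant_of_weighted_bound:
  fixes k :: "complex \<Rightarrow> complex"
  assumes hol: "k holomorphic_on UNIV"
    and bnd: "\<And>u. \<bar>cmod (u + 1) - cmod u\<bar> * cmod (k u) \<le> C"
  shows "k u = k 0"
proof -
  have C: "0 \<le> C" using bnd[of "- 1 / 2"] by simp
  have affine: "k u = k 0 + deriv k 0 * u" for u
  proof -
    have "k u = (\<Sum>i\<le>1. (deriv ^^ i) k 0 / fact i * u ^ i)"
    proof (rule Liouville_polynomial[OF hol, of 1 "6 * C"])
      fix z :: complex assume "1 \<le> cmod z"
      then have "C * (2 * cmod z + 4) \<le> C * (6 * cmod z)"
        using C by (intro mult_left_mono) auto
      then show "cmod (k z) \<le> 6 * C * cmod z ^ 1"
        using entire_linear_growth_of_weighted_bound[OF hol bnd, of z] by simp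
    qed
    then show ?thesis by simp
  qed
  have "deriv k 0 = 0"
  proof (rule ccontr)
    assume "deriv k 0 \<noteq> 0"
    define r where "r = (C + cmod (k 0) + 1) / cmod (deriv k 0)"
    have r: "r > 0" using \<open>deriv k 0 \<noteq> 0\<close> C by (simp add: r_def add_nonneg_pos)
    \<comment> \<open>On the positive real axis the weight is identically 1, so k is bounded there.\<close>
    have "cmod (of_real r + 1) = r + 1" "cmod (of_real r) = r"
      using r by (metis abs_of_pos norm_of_real of_real_1 of_real_add add_pos_pos zero_less_one)
        (use r in simp)
    then have "cmod (k (of_real r)) \<le> C"
      using bnd[of "of_real r"] by simp
    moreover have "cmod (deriv k 0 * of_real r) = C + cmod (k 0) + 1"
      using \<open>deriv k 0 \<noteq> 0\<close> r by (simp only: norm_mult norm_of_real abs_of_pos) (simp add: r_def)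
    moreover have "cmod (deriv k 0 * of_real r) \<le> cmod (k (of_real r)) + cmod (k 0)"
      using affine[of "of_real r"] norm_triangle_ineq4[of "k (of_real r)" "k 0"] by simp
    ultimately show False by linarith
  qed
  then show ?thesis using affine by simp
qed

section \<open>Complex structures and complexified functionals\<close>

locale complex_normed_structure =
  fixes cmul :: "complex \<Rightarrow> 'a::real_normed_vector \<Rightarrow> 'a"
  assumes cmul_add: "cmul c (x + y) = cmul c x + cmul c y"
    and cmul_add_left: "cmul (c + d) x = cmul c x + cmul d x"
    and cmul_cmul: "cmul c (cmul d x) = cmul (c * d) x"
    and cmul_of_real: "cmul (of_real r) x = r *\<^sub>R x"
    and norm_cmul: "norm (cmul c x) = cmod c * norm x"
begin

lemma cmul_one [simp]: "cmul 1 x = x"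
  using cmul_of_real[of 1 x] by simp

lemma cmul_zero_left [simp]: "cmul 0 x = 0"
  using cmul_of_real[of 0 x] by simp

lemma cmul_zero [simp]: "cmul c 0 = 0"
  using cmul_add[of c 0 0] by simp

lemma cmul_minus: "cmul c (- x) = - cmul c x"
  using cmul_add[of c x "- x"] by (simp add: eq_neg_iff_add_eq_0 add.commute)

lemma cmul_diff: "cmul c (x - y) = cmul c x - cmul c y"
  using cmul_add[of c x "- y"] by (simp add: cmul_minus)

lemma cmul_minus_left: "cmul (- c) x = - cmul c x"
  using cmul_add_left[of c "- c" x] by (simp add: eq_neg_iff_add_eq_0 add.commute)

lemma cmul_diff_left: "cmul (c - d) x = cmul c x - cmul d x"
  using cmul_add_left[of c "- d" x] by (simp add: cmul_minus_left)

lemma cmul_commute: "cmul c (cmul d x) = cmul d (cmul c x)"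
  by (simp add: cmul_cmul mult.commute)

lemma cmul_scaleR: "cmul c (r *\<^sub>R x) = r *\<^sub>R cmul c x"
  by (metis cmul_commute cmul_of_real)

lemma bounded_linear_cmul: "bounded_linear (cmul c)"
  by (rule bounded_linear_intro[where K = "cmod c"]) (simp_all add: cmul_add cmul_scaleR norm_cmul)

lemma cmul_Re_Im: "cmul c x = Re c *\<^sub>R x + Im c *\<^sub>R cmul \<i> x"
proof -
  have "c = of_real (Re c) + of_real (Im c) * \<i>" by (simp add: complex_eq_iff)
  then have "cmul c x = cmul (of_real (Re c)) x + cmul (of_real (Im c)) (cmul \<i> x)"
    by (metis cmul_add_left cmul_cmul)
  then show ?thesis by (simp add: cmul_of_real)
qed

lemma cmul_ii: "cmul \<i> (cmul \<i> x) = - x"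
  using cmul_cmul[of \<i> \<i> x] cmul_of_real[of "- 1" x] by simp

text \<open>A complex-linear functional \<open>\<psi>\<close> is determined by its real part, since
  \<open>Im (\<psi> x) = - Re (\<psi> (\<i> x))\<close>.\<close>
definition complexify :: "('a \<Rightarrow> real) \<Rightarrow> 'a \<Rightarrow> complex" where
  "complexify \<phi> x = Complex (\<phi> x) (- \<phi> (cmul \<i> x))"

lemma Re_complexify [simp]: "Re (complexify \<phi> x) = \<phi> x"
  and Im_complexify [simp]: "Im (complexify \<phi> x) = - \<phi> (cmul \<i> x)"
  by (simp_all add: complexify_def)

lemma complexify_cmul:
  assumes "linear \<phi>"
  shows "complexify \<phi> (cmul c x) = c * complexify \<phi> x"
proof -
  have re: "\<phi> (cmul c x) = Re c * \<phi> x + Im c * \<phi> (cmul \<i> x)"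
    using assms by (simp add: cmul_Re_Im[of c x] linear_add linear_scale)
  have "cmul \<i> (cmul c x) = Re c *\<^sub>R cmul \<i> x - Im c *\<^sub>R x"
    unfolding cmul_commute[of \<i> c] cmul_Re_Im[of c "cmul \<i> x"] cmul_ii by simp
  then have im: "\<phi> (cmul \<i> (cmul c x)) = Re c * \<phi> (cmul \<i> x) - Im c * \<phi> x"
    using assms by (simp add: linear_diff linear_scale)
  show ?thesis
    using re im by (simp add: complexify_def complex_eq_iff algebra_simps)
qed

lemma bounded_linear_complexify:
  assumes "bounded_linear \<phi>"
  shows "bounded_linear (complexify \<phi>)"
proof -
  interpret \<phi>: bounded_linear \<phi> by fact
  obtain K where K: "\<And>x. norm (\<phi> x) \<le> norm x * K" using \<phi>.bounded by blast
  show ?thesis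
  proof (rule bounded_linear_intro[where K = "2 * K"])
    show "complexify \<phi> (x + y) = complexify \<phi> x + complexify \<phi> y" for x y
      by (simp add: complexify_def cmul_add \<phi>.add complex_eq_iff)
    show "complexify \<phi> (r *\<^sub>R x) = r *\<^sub>R complexify \<phi> x" for r x
      by (simp add: complexify_def cmul_scaleR \<phi>.scaleR complex_eq_iff)
    show "norm (complexify \<phi> x) \<le> norm x * (2 * K)" for x
    proof -
      have "norm (complexify \<phi> x) \<le> \<bar>\<phi> x\<bar> + \<bar>\<phi> (cmul \<i> x)\<bar>"
        using cmod_le[of "complexify \<phi> x"] by simp
      moreover have "\<bar>\<phi> (cmul \<i> x)\<bar> \<le> norm x * K"
        using K[of "cmul \<i> x"] by (simp add: norm_cmul)
      ultimately show ?thesis using K[of x] by simp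
    qed
  qed
qed

end

section \<open>Operators whose resolvent is entire\<close>

definition bounded_invertible :: "('a::real_normed_vector \<Rightarrow> 'a) \<Rightarrow> bool" where
  "bounded_invertible F \<longleftrightarrow> bounded_linear F \<and> (\<exists>G. bounded_linear G \<and> F \<circ> G = id \<and> G \<circ> F = id)"

lemma bounded_invertibleD:
  assumes "bounded_invertible F"
  shows "bounded_linear (inv F)" "F (inv F x) = x" "inv F (F x) = x"
proof -
  obtain G where G: "bounded_linear G" "F \<circ> G = id" "G \<circ> F = id"
    using assms unfolding bounded_invertible_def by blast
  have "inv F = G" by (rule inv_unique_comp[OF G(2,3)])
  then show "bounded_linear (inv F)" "F (inv F x) = x" "inv F (F x) = x"
    using G by (simp_all add: pointfree_idE)
qed

lemma bounded_invertible_commuting_factor: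
  assumes "bounded_linear F" "bounded_linear G" "F \<circ> G = H" "G \<circ> F = H" "bounded_invertible H"
  shows "bounded_invertible F"
proof -
  obtain K where K: "bounded_linear K" "H \<circ> K = id" "K \<circ> H = id"
    using assms(5) unfolding bounded_invertible_def by blast
  have FGK: "F (G (K x)) = x" for x
    using assms(3) K(2) by (metis comp_apply id_apply)
  have KGF: "K (G (F x)) = x" for x
    using assms(4) K(3) by (metis comp_apply id_apply)
  have "G (K (F x)) = x" for x
    by (metis FGK KGF)
  then have "F \<circ> (G \<circ> K) = id" "(G \<circ> K) \<circ> F = id"
    using FGK by auto
  moreover have "bounded_linear (G \<circ> K)"
    using assms(2) K(1) by (simp add: bounded_linear_compose o_def)
  ultimately show ?thesis
    using assms(1) unfolding bounded_invertible_def by blast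
qed

text \<open>For \<open>A = T - I\<close> and \<open>u \<noteq> 0\<close>, \<open>(I - u A)\<^sup>-\<^sup>1 = -(1/u) (T - (1 + 1/u))\<^sup>-\<^sup>1\<close>: the substitution
  \<open>\<lambda> = 1 + 1/u\<close> sends the spectral point \<open>1\<close> of \<open>T\<close> to infinity.\<close>
locale entire_resolvent = complex_normed_structure cmul
  for cmul :: "complex \<Rightarrow> 'a::real_normed_vector \<Rightarrow> 'a" +
  fixes A :: "'a \<Rightarrow> 'a"
  assumes bounded_linear_A: "bounded_linear A"
    and A_cmul: "A (cmul c x) = cmul c (A x)"
    and bounded_invertible_id_minus: "bounded_invertible (\<lambda>x. x - cmul u (A x))"
begin

definition L :: "complex \<Rightarrow> 'a \<Rightarrow> 'a" where
  "L u x = x - cmul u (A x)"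

definition res :: "complex \<Rightarrow> 'a \<Rightarrow> 'a" where
  "res u = inv (L u)"

lemma bounded_linear_res: "bounded_linear (res u)"
  and L_res [simp]: "L u (res u x) = x"
  and res_L [simp]: "res u (L u x) = x"
  using bounded_invertibleD[OF bounded_invertible_id_minus[of u]]
  by (simp_all add: res_def L_def[abs_def])

lemma res_zero: "res 0 x = x"
  using res_L[of 0 x] by (simp add: L_def)

lemma L_diff: "L u (x - y) = L u x - L u y"
  using bounded_linear_A by (simp add: L_def linear_simps cmul_diff)

lemma L_cmul: "L u (cmul c x) = cmul c (L u x)"
  by (simp add: L_def A_cmul cmul_diff cmul_commute)

lemma L_inj: "L u x = L u y \<Longrightarrow> x = y"
  by (metis res_L)

lemma resolvent_identity: "res u x - res v x = cmul (u - v) (res u (A (res v x)))"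
proof (rule L_inj[of u])
  have "L u z = L v z - cmul (u - v) (A z)" for z
    by (simp add: L_def cmul_diff_left)
  then show "L u (res u x - res v x) = L u (cmul (u - v) (res u (A (res v x))))"
    by (simp add: L_diff L_cmul)
qed

lemma res_locally_bounded:
  obtains d K where "d > 0" "\<And>u w. cmod (u - u0) < d \<Longrightarrow> norm (res u w) \<le> K * norm w"
proof -
  obtain K0 where K0: "K0 > 0" "\<And>w. norm (res u0 w) \<le> norm w * K0"
    using bounded_linear.pos_bounded[OF bounded_linear_res] by blast
  obtain Ka where Ka: "Ka > 0" "\<And>w. norm (A w) \<le> norm w * Ka"
    using bounded_linear.pos_bounded[OF bounded_linear_A] by blast
  define d where "d = 1 / (2 * K0 * Ka)"
  have d: "d > 0" using K0 Ka by (simp add: d_def)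
  have "norm (res u w) \<le> 2 * K0 * norm w" if u: "cmod (u - u0) < d" for u w
  proof -
    have "res u w = res u0 w - cmul (u0 - u) (res u0 (A (res u w)))"
      using resolvent_identity[of u0 w u] by (simp add: algebra_simps)
    then have "norm (res u w) \<le> norm (res u0 w) + cmod (u0 - u) * norm (res u0 (A (res u w)))"
      by (metis norm_cmul norm_triangle_ineq4)
    moreover have "cmod (u0 - u) * norm (res u0 (A (res u w))) \<le> d * (norm (res u w) * Ka * K0)"
    proof (rule mult_mono)
      show "cmod (u0 - u) \<le> d" using u by (simp add: norm_minus_commute)
      show "norm (res u0 (A (res u w))) \<le> norm (res u w) * Ka * K0"
        using K0(2)[of "A (res u w)"] Ka(2)[of "res u w"] K0(1) by (meson mult_right_mono order_trans less_imp_le)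
    qed (use d in auto)
    moreover have "d * (norm (res u w) * Ka * K0) = norm (res u w) / 2"
      using K0 Ka by (simp add: d_def)
    ultimately have "norm (res u w) \<le> norm (res u0 w) + norm (res u w) / 2" by linarith
    moreover have "norm (res u0 w) \<le> K0 * norm w" using K0(2)[of w] by (simp add: mult.commute)
    ultimately show ?thesis by linarith
  qed
  then show thesis using that d by blast
qed

lemma tendsto_res: "((\<lambda>u. res u w) \<longlongrightarrow> res u0 w) (at u0)"
proof -
  obtain d K where d: "d > 0" and K: "\<And>u w. cmod (u - u0) < d \<Longrightarrow> norm (res u w) \<le> K * norm w"
    using res_locally_bounded by blast
  have "\<forall>\<^sub>F u in at u0. norm (res u w - res u0 w) \<le> cmod (u - u0) * (K * norm (A (res u0 w)))"
    unfolding eventually_at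
  proof (intro exI[of _ d] conjI ballI impI d)
    fix u assume "u \<noteq> u0 \<and> dist u u0 < d"
    then have "norm (res u (A (res u0 w))) \<le> K * norm (A (res u0 w))"
      using K by (simp add: dist_norm)
    then show "norm (res u w - res u0 w) \<le> cmod (u - u0) * (K * norm (A (res u0 w)))"
      by (simp add: resolvent_identity norm_cmul mult_left_mono)
  qed
  moreover have "((\<lambda>u. cmod (u - u0) * (K * norm (A (res u0 w)))) \<longlongrightarrow> 0) (at u0)"
    by (intro tendsto_mult_left_zero tendsto_norm_zero LIM_zero tendsto_ident_at)
  ultimately show ?thesis
    by (rule Lim_null_comparison[THEN LIM_zero_cancel])
qed

lemma complexify_res_has_field_derivative:
  assumes \<phi>: "bounded_linear \<phi>"
  shows "((\<lambda>u. complexify \<phi> (res u x)) has_field_derivative complexify \<phi> (res u0 (A (res u0 x)))) (at u0)"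
  unfolding has_field_derivative_iff
proof (rule Lim_transform_eventually)
  interpret \<psi>: bounded_linear "complexify \<phi>" by (rule bounded_linear_complexify[OF \<phi>])
  show "((\<lambda>u. complexify \<phi> (res u (A (res u0 x)))) \<longlongrightarrow> complexify \<phi> (res u0 (A (res u0 x)))) (at u0)"
    by (rule \<psi>.tendsto[OF tendsto_res])
  have "complexify \<phi> (res u (A (res u0 x))) = (complexify \<phi> (res u x) - complexify \<phi> (res u0 x)) / (u - u0)"
    if "u \<noteq> u0" for u
    using that by (simp add: \<psi>.diff[symmetric] resolvent_identity
        complexify_cmul[OF bounded_linear.linear[OF \<phi>]])
  then show "\<forall>\<^sub>F u in at u0. complexify \<phi> (res u (A (res u0 x))) =
      (complexify \<phi> (res u x) - complexify \<phi> (res u0 x)) / (u - u0)"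
    by (auto simp: eventually_at_filter)
qed

lemma holomorphic_complexify_res:
  "bounded_linear \<phi> \<Longrightarrow> (\<lambda>u. complexify \<phi> (res u x)) holomorphic_on UNIV"
  using complexify_res_has_field_derivative by (auto simp: holomorphic_on_open)

lemma complexify_res_const_of_growth:
  assumes growth: "\<And>u y. \<bar>cmod (u + 1) - cmod u\<bar> * norm y \<le> C * norm (L u y)"
    and \<phi>: "bounded_linear \<phi>"
  shows "complexify \<phi> (res u x) = complexify \<phi> x"
proof -
  obtain K where K: "K > 0" "\<And>y. cmod (complexify \<phi> y) \<le> norm y * K"
    using bounded_linear.pos_bounded[OF bounded_linear_complexify[OF \<phi>]] by blast
  have "\<bar>cmod (v + 1) - cmod v\<bar> * cmod (complexify \<phi> (res v x)) \<le> K * C * norm x" for v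
  proof -
    have "\<bar>cmod (v + 1) - cmod v\<bar> * cmod (complexify \<phi> (res v x))
        \<le> K * (\<bar>cmod (v + 1) - cmod v\<bar> * norm (res v x))"
      using mult_left_mono[OF K(2)[of "res v x"], of "\<bar>cmod (v + 1) - cmod v\<bar>"]
      by (simp add: algebra_simps)
    also have "\<dots> \<le> K * C * norm x"
      using growth[of v "res v x"] K(1) by (simp add: mult_left_mono mult.assoc)
    finally show ?thesis .
  qed
  then have "complexify \<phi> (res u x) = complexify \<phi> (res 0 x)"
    by (rule entire_constant_of_weighted_bound[OF holomorphic_complexify_res[OF \<phi>]])
  then show ?thesis by (simp add: res_zero)
qed

lemma A_eq_zero_of_resolvent_growth:
  assumes growth: "\<And>u y. \<bar>cmod (u + 1) - cmod u\<bar> * norm y \<le> C * norm (L u y)"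
  shows "A z = 0"
proof -
  have "\<phi> (A z) = 0" if \<phi>: "bounded_linear \<phi>" for \<phi> :: "'a \<Rightarrow> real"
  proof -
    interpret \<psi>: bounded_linear "complexify \<phi>" by (rule bounded_linear_complexify[OF \<phi>])
    have "complexify \<phi> z = complexify \<phi> (res 1 (L 1 z))" by simp
    also have "\<dots> = complexify \<phi> z - complexify \<phi> (A z)"
      by (simp add: complexify_res_const_of_growth[OF growth \<phi>] L_def \<psi>.diff)
    finally show ?thesis
      using Re_complexify[of \<phi> "A z"] by simp
  qed
  moreover obtain \<phi> :: "'a \<Rightarrow> real" where "bounded_linear \<phi>" "\<phi> (A z) = norm (A z)"
    by (rule exists_norming_functional)
  ultimately show ?thesis by force
qed

end

section \<open>Gelfand's theorem\<close>

lemma bounded_linear_funpow: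
  fixes S :: "'a::real_normed_vector \<Rightarrow> 'a"
  assumes "bounded_linear S"
  shows "bounded_linear (S ^^ n)"
proof (induction n)
  case 0
  show ?case by (simp add: id_def bounded_linear_ident)
next
  case (Suc n)
  then show ?case
    unfolding funpow.simps comp_def by (rule bounded_linear_compose[OF assms])
qed

context complex_normed_structure
begin

lemma funpow_cmul:
  assumes "\<And>c x. S (cmul c x) = cmul c (S x)"
  shows "(S ^^ n) (cmul c x) = cmul c ((S ^^ n) x)"
  by (induction n) (simp_all add: assms)

lemma bounded_invertible_cmul:
  assumes "bounded_invertible F" "c \<noteq> 0"
  shows "bounded_invertible (\<lambda>x. cmul c (F x))"
proof -
  have "bounded_linear (\<lambda>x. cmul c (F x))" "bounded_linear (\<lambda>x. inv F (cmul (1 / c) x))"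
    using assms(1) bounded_invertibleD(1)[OF assms(1)] unfolding bounded_invertible_def
    by (auto intro: bounded_linear_compose[OF _ bounded_linear_cmul, unfolded o_def]
        bounded_linear_compose[OF bounded_linear_cmul, unfolded o_def])
  moreover have "cmul c (F (inv F (cmul (1 / c) x))) = x" "inv F (cmul (1 / c) (cmul c (F x))) = x" for x
    using assms by (simp_all add: bounded_invertibleD(2,3) cmul_cmul)
  ultimately show ?thesis
    unfolding bounded_invertible_def by (intro conjI exI[of _ "\<lambda>x. inv F (cmul (1 / c) x)"]) auto
qed

lemma neumann_telescope:
  assumes S: "bounded_linear S" "\<And>c x. S (cmul c x) = cmul c (S x)"
  shows "y = (\<Sum>n<N. cmul (a ^ n) ((S ^^ n) (y - cmul a (S y)))) + cmul (a ^ N) ((S ^^ N) y)"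
proof (induction N)
  case (Suc N)
  have "(S ^^ N) (y - cmul a (S y)) = (S ^^ N) y - cmul a ((S ^^ Suc N) y)"
    using bounded_linear_funpow[OF S(1), of N]
    by (simp add: linear_simps funpow_cmul[OF S(2)] funpow_Suc_right del: funpow.simps)
  then have "cmul (a ^ N) ((S ^^ N) (y - cmul a (S y)))
      = cmul (a ^ N) ((S ^^ N) y) - cmul (a ^ Suc N) ((S ^^ Suc N) y)"
    by (simp add: cmul_diff cmul_cmul mult.commute del: funpow.simps)
  then show ?case using Suc by (simp del: funpow.simps)
qed simp

lemma power_bounded_neumann_bound:
  assumes S: "bounded_linear S" "\<And>c x. S (cmul c x) = cmul c (S x)"
    and M: "\<And>n x. norm ((S ^^ n) x) \<le> M * norm x"
    and a: "cmod a < 1"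
  shows "(1 - cmod a) * norm y \<le> M * norm (y - cmul a (S y))"
proof -
  define w where "w = y - cmul a (S y)"
  have "norm y \<le> M * norm w / (1 - cmod a) + cmod a ^ N * (M * norm y)" for N
  proof -
    have "norm (\<Sum>n<N. cmul (a ^ n) ((S ^^ n) w)) \<le> (\<Sum>n<N. cmod a ^ n * (M * norm w))"
      by (rule order_trans[OF norm_sum sum_mono])
        (simp add: norm_cmul norm_power M mult_left_mono del: funpow.simps)
    also have "\<dots> = M * norm w * ((1 - cmod a ^ N) / (1 - cmod a))"
      using a by (simp add: sum_gp_strict flip: sum_distrib_left mult.commute)
    also have "\<dots> \<le> M * norm w / (1 - cmod a)"
    proof -
      have "M * norm w * (1 - cmod a ^ N) \<le> M * norm w * 1"
        using order_trans[OF norm_ge_zero M[of 0 w]] by (intro mult_left_mono) auto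
      then show ?thesis using a by (simp add: divide_right_mono)
    qed
    finally have "norm (\<Sum>n<N. cmul (a ^ n) ((S ^^ n) w)) \<le> M * norm w / (1 - cmod a)" .
    moreover have "norm (cmul (a ^ N) ((S ^^ N) y)) \<le> cmod a ^ N * (M * norm y)"
      by (simp add: norm_cmul norm_power M mult_left_mono del: funpow.simps)
    ultimately show ?thesis
      using norm_triangle_ineq[of "\<Sum>n<N. cmul (a ^ n) ((S ^^ n) w)" "cmul (a ^ N) ((S ^^ N) y)"]
      by (simp add: w_def flip: neumann_telescope[OF S])
  qed
  moreover have "(\<lambda>N. M * norm w / (1 - cmod a) + cmod a ^ N * (M * norm y))
      \<longlonglongrightarrow> M * norm w / (1 - cmod a) + 0 * (M * norm y)"
    using a by (intro tendsto_intros LIMSEQ_power_zero) simp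
  ultimately have "norm y \<le> M * norm w / (1 - cmod a)"
    by (intro LIMSEQ_le_const[where a = "norm y"]) auto
  then show ?thesis
    using a by (simp add: w_def field_simps)
qed

lemma power_bounded_lower_bound:
  assumes S: "bounded_linear S" "\<And>c x. S (cmul c x) = cmul c (S x)"
    and M: "\<And>n x. norm ((S ^^ n) x) \<le> M * norm x"
    and cd: "cmod d < cmod c"
  shows "(cmod c - cmod d) * norm y \<le> M * norm (cmul c y - cmul d (S y))"
proof -
  have c: "c \<noteq> 0" using cd by auto
  have a: "cmod (d / c) < 1" using cd c by (simp add: norm_divide divide_less_eq)
  have "cmul c (y - cmul (d / c) (S y)) = cmul c y - cmul d (S y)"
    using c by (simp add: cmul_diff cmul_cmul)
  then have scale: "norm (cmul c y - cmul d (S y)) = cmod c * norm (y - cmul (d / c) (S y))"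
    by (metis norm_cmul)
  have "(cmod c - cmod d) * norm y = cmod c * ((1 - cmod (d / c)) * norm y)"
    using c by (simp add: norm_divide field_simps)
  also have "\<dots> \<le> cmod c * (M * norm (y - cmul (d / c) (S y)))"
    by (rule mult_left_mono[OF power_bounded_neumann_bound[OF S M a] norm_ge_zero])
  finally show ?thesis
    by (simp add: scale mult.left_commute)
qed

lemma inv_cmul:
  assumes "bounded_invertible T" "\<And>c x. T (cmul c x) = cmul c (T x)"
  shows "inv T (cmul c x) = cmul c (inv T x)"
  by (metis assms bounded_invertibleD(2,3))

lemma doubly_power_bounded_resolvent_growth:
  assumes T: "bounded_invertible T" "\<And>c x. T (cmul c x) = cmul c (T x)"
    and M: "1 \<le> M" "\<And>n x. norm ((T ^^ n) x) \<le> M * norm x" "\<And>n x. norm ((inv T ^^ n) x) \<le> M * norm x"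
  shows "\<bar>cmod (u + 1) - cmod u\<bar> * norm y \<le> M * M * norm (y - cmul u (T y - y))"
proof -
  define Ly where "Ly = y - cmul u (T y - y)"
  have Ly: "Ly = cmul (u + 1) y - cmul u (T y)"
    by (simp add: Ly_def cmul_diff cmul_add_left algebra_simps)
  have TL: "bounded_linear T" and SL: "bounded_linear (inv T)"
    using T(1) bounded_invertibleD(1) unfolding bounded_invertible_def by blast+
  text \<open>Factor out the coefficient of larger modulus in \<open>Ly = (u + 1) y - u T y\<close>, using
    \<open>T\<^sup>-\<^sup>1 Ly = (u + 1) T\<^sup>-\<^sup>1 y - u y\<close> when it is \<open>u\<close>.\<close>
  consider "cmod u < cmod (u + 1)" | "cmod u = cmod (u + 1)" | "cmod (u + 1) < cmod u"
    by linarith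
  then show ?thesis
  proof cases
    case 1
    then have "(cmod (u + 1) - cmod u) * norm y \<le> M * norm Ly"
      using power_bounded_lower_bound[OF TL T(2) M(2)] by (simp add: Ly)
    also have "\<dots> \<le> M * M * norm Ly"
      using M(1) by (simp add: mult_right_mono)
    finally show ?thesis using 1 by (simp add: Ly_def)
  next
    case 2
    then show ?thesis
      using M(1) by simp
  next
    case 3
    have "cmul u y - cmul (u + 1) (inv T y) = - inv T Ly"
      using SL by (simp add: Ly linear_simps inv_cmul[OF T] bounded_invertibleD(3)[OF T(1)])
    then have "(cmod u - cmod (u + 1)) * norm y \<le> M * norm (inv T Ly)"
      using power_bounded_lower_bound[OF SL inv_cmul[OF T] M(3) 3, of y] by (metis norm_minus_cancel)
    also have "\<dots> \<le> M * (M * norm Ly)"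
      using M(3)[of 1 Ly] M(1) by (intro mult_left_mono) auto
    finally show ?thesis using 3 by (simp add: Ly_def)
  qed
qed

lemma bounded_invertible_id_minus_cmul_T_minus_id:
  assumes spectrum: "\<And>l. l \<noteq> 1 \<Longrightarrow> bounded_invertible (\<lambda>x. T x - cmul l x)"
  shows "bounded_invertible (\<lambda>x. x - cmul u (T x - x))"
proof (cases "u = 0")
  case True
  then show ?thesis
    unfolding bounded_invertible_def by (auto intro!: exI[of _ id] simp: id_def bounded_linear_ident)
next
  case False
  have "(u + 1) / u \<noteq> 1" using False by (simp add: divide_eq_1_iff)
  from bounded_invertible_cmul[OF spectrum[OF this], of "- u"]
  have "bounded_invertible (\<lambda>x. cmul (- u) (T x - cmul ((u + 1) / u) x))"
    using False by simp
  moreover have "cmul (- u) (T x - cmul ((u + 1) / u) x) = x - cmul u (T x - x)" for x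
  proof -
    have "- u * ((u + 1) / u) = - 1 - u" using False by (simp add: field_simps)
    then show ?thesis
      by (simp add: cmul_diff cmul_cmul cmul_diff_left cmul_minus_left)
  qed
  ultimately show ?thesis by simp
qed

theorem doubly_power_bounded_spectrum_one_eq_id:
  assumes T: "bounded_invertible T" "\<And>c x. T (cmul c x) = cmul c (T x)"
    and M: "1 \<le> M" "\<And>n x. norm ((T ^^ n) x) \<le> M * norm x" "\<And>n x. norm ((inv T ^^ n) x) \<le> M * norm x"
    and spectrum: "\<And>l. l \<noteq> 1 \<Longrightarrow> bounded_invertible (\<lambda>x. T x - cmul l x)"
  shows "T = id"
proof -
  have TL: "bounded_linear T" using T(1) unfolding bounded_invertible_def by blast
  interpret entire_resolvent cmul "\<lambda>x. T x - x"
  proof (rule entire_resolvent.intro[OF complex_normed_structure_axioms entire_resolvent_axioms.intro])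
    show "bounded_linear (\<lambda>x. T x - x)"
      by (intro bounded_linear_sub TL bounded_linear_ident)
    show "T (cmul c x) - cmul c x = cmul c (T x - x)" for c x
      by (simp add: T(2) cmul_diff)
    show "bounded_invertible (\<lambda>x. x - cmul u (T x - x))" for u
      by (rule bounded_invertible_id_minus_cmul_T_minus_id[OF spectrum])
  qed
  have "T x - x = 0" for x
    by (rule A_eq_zero_of_resolvent_growth[where C = "M * M"])
      (simp add: L_def doubly_power_bounded_resolvent_growth[OF T M])
  then show ?thesis by auto
qed

lemma quadratic_factorization:
  assumes "linear T" "\<And>c x. T (cmul c x) = cmul c (T x)"
  shows "(\<lambda>x. T x - cmul l x) \<circ> (\<lambda>x. T x - cmul (cnj l) x)
    = (\<lambda>x. T (T x) - (2 * Re l) *\<^sub>R T x + (cmod l)\<^sup>2 *\<^sub>R x)"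
proof
  fix x
  have "cmul (cnj l + l) y = (2 * Re l) *\<^sub>R y" "cmul (l * cnj l) y = (cmod l)\<^sup>2 *\<^sub>R y" for y
    by (simp_all only: add.commute[of "cnj l"] complex_add_cnj flip: complex_norm_square cmul_of_real)
  then show "((\<lambda>x. T x - cmul l x) \<circ> (\<lambda>x. T x - cmul (cnj l) x)) x
      = T (T x) - (2 * Re l) *\<^sub>R T x + (cmod l)\<^sup>2 *\<^sub>R x"
    using assms by (simp add: linear_diff cmul_diff cmul_cmul algebra_simps flip: cmul_add_left)
qed

end

section \<open>Quaternionic operators\<close>

definition quat_of_complex :: "complex \<Rightarrow> quat" where
  "quat_of_complex c = Quat (Re c) (Im c) 0 0"

lemma qadd_quat_of_complex: "qadd (quat_of_complex a) (quat_of_complex b) = quat_of_complex (a + b)"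
  and qmult_quat_of_complex: "qmult (quat_of_complex a) (quat_of_complex b) = quat_of_complex (a * b)"
  and quat_of_complex_of_real: "quat_of_complex (of_real r) = qreal r"
  and qabs_quat_of_complex: "qabs (quat_of_complex c) = cmod c"
  and qRe_quat_of_complex: "qRe (quat_of_complex c) = Re c"
  and quat_of_complex_eq_qreal_1: "quat_of_complex c = qreal 1 \<longleftrightarrow> c = 1"
  by (simp_all add: quat_of_complex_def qadd_def qmult_def qreal_def qabs_def cmod_def complex_eq_iff)

lemma complex_normed_structure_rmul:
  assumes "two_sided_qbanach lmul rmul"
  shows "complex_normed_structure (\<lambda>c x. rmul x (quat_of_complex c))"
proof
  have rmul: "rmul (x + y) s = rmul x s + rmul y s" "rmul x (qadd s t) = rmul x s + rmul x t"
    "rmul x (qmult s t) = rmul (rmul x s) t" "rmul x (qreal r) = r *\<^sub>R x" "norm (rmul x s) = qabs s * norm x"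
    for x y s t r
    using assms unfolding two_sided_qbanach_def by blast+
  show "rmul (x + y) (quat_of_complex c) = rmul x (quat_of_complex c) + rmul y (quat_of_complex c)"
    for c x y by (rule rmul(1))
  show "rmul x (quat_of_complex (c + d)) = rmul x (quat_of_complex c) + rmul x (quat_of_complex d)"
    for c d x by (simp add: rmul(2) flip: qadd_quat_of_complex)
  show "rmul (rmul x (quat_of_complex d)) (quat_of_complex c) = rmul x (quat_of_complex (c * d))"
    for c d x by (metis rmul(3) qmult_quat_of_complex mult.commute)
  show "rmul x (quat_of_complex (of_real r)) = r *\<^sub>R x" for r x
    by (simp add: quat_of_complex_of_real rmul(4))
  show "norm (rmul x (quat_of_complex c)) = cmod c * norm x" for c x
    by (simp add: rmul(5) qabs_quat_of_complex)
qed

lemma bounded_invertible_of_invertible_op: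
  assumes "invertible_op rmul T"
  shows "bounded_invertible T"
  using assms unfolding invertible_op_def bounded_invertible_def bounded_right_linear_def by blast

lemma op_int_power_of_nat: "op_int_power T (int n) = T ^^ n"
  and op_int_power_of_neg_nat: "op_int_power T (- int n) = inv T ^^ n"
  by (simp_all add: op_int_power_def)

lemma doubly_power_bounded_funpow:
  fixes T :: "'a::real_normed_vector \<Rightarrow> 'a"
  assumes T: "bounded_invertible T"
    and bdd: "bdd_above (range (\<lambda>n::int. onorm (op_int_power T n)))"
  obtains M where "1 \<le> M" "\<And>n x. norm ((T ^^ n) x) \<le> M * norm x"
    "\<And>n x. norm ((inv T ^^ n) x) \<le> M * norm x"
proof -
  obtain M0 where M0: "\<And>n. onorm (op_int_power T n) \<le> M0"
    using bdd unfolding bdd_above_def by auto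
  have "norm (F x) \<le> max 1 M0 * norm x" if "bounded_linear F" "onorm F \<le> M0" for F :: "'a \<Rightarrow> 'a" and x
    using onorm[OF that(1), of x] that(2)
    by (meson max.cobounded2 mult_right_mono norm_ge_zero order_trans)
  moreover have "bounded_linear (T ^^ n)" "bounded_linear (inv T ^^ n)" for n
    using T bounded_invertibleD(1)[OF T] unfolding bounded_invertible_def
    by (auto intro: bounded_linear_funpow)
  ultimately have "norm ((T ^^ n) x) \<le> max 1 M0 * norm x" "norm ((inv T ^^ n) x) \<le> max 1 M0 * norm x"
    for n x
    using M0[of "int n"] M0[of "- int n"] by (simp_all add: op_int_power_of_nat op_int_power_of_neg_nat)
  then show thesis by (intro that[of "max 1 M0"]) auto
qed

lemma bounded_invertible_shift_of_S_spectrum: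
  assumes X: "two_sided_qbanach lmul rmul" and T: "bounded_right_linear rmul T"
    and l: "quat_of_complex l \<notin> S_spectrum rmul T"
  shows "bounded_invertible (\<lambda>x. T x - rmul x (quat_of_complex l))"
proof -
  interpret complex_normed_structure "\<lambda>c x. rmul x (quat_of_complex c)"
    by (rule complex_normed_structure_rmul[OF X])
  have TL: "linear T" and Tc: "T (rmul x (quat_of_complex c)) = rmul (T x) (quat_of_complex c)" for x c
    using T unfolding bounded_right_linear_def by (blast dest: bounded_linear.linear)+
  show ?thesis
  proof (rule bounded_invertible_commuting_factor)
    show "bounded_invertible (Qop (quat_of_complex l) T)"
      using l unfolding S_spectrum_def by (simp add: bounded_invertible_of_invertible_op)
    show "(\<lambda>x. T x - rmul x (quat_of_complex l)) \<circ> (\<lambda>x. T x - rmul x (quat_of_complex (cnj l)))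
        = Qop (quat_of_complex l) T"
      using quadratic_factorization[OF TL Tc, of l]
      by (simp add: Qop_def qRe_quat_of_complex qabs_quat_of_complex)
    show "(\<lambda>x. T x - rmul x (quat_of_complex (cnj l))) \<circ> (\<lambda>x. T x - rmul x (quat_of_complex l))
        = Qop (quat_of_complex l) T"
      using quadratic_factorization[OF TL Tc, of "cnj l"]
      by (simp add: Qop_def qRe_quat_of_complex qabs_quat_of_complex)
  qed (use T in \<open>auto simp: bounded_right_linear_def intro!: bounded_linear_sub bounded_linear_cmul\<close>)
qed

theorem corollary4p4:
  fixes lmul :: "quat \<Rightarrow> 'a::banach \<Rightarrow> 'a" and rmul :: "'a \<Rightarrow> quat \<Rightarrow> 'a"
    and T :: "'a \<Rightarrow> 'a"
  assumes "two_sided_qbanach lmul rmul"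
    and "bounded_right_linear rmul T"
    and "invertible_op rmul T"
    and "bdd_above (range (\<lambda>n::int. onorm (op_int_power T n)))"
    and "S_spectrum rmul T = {qreal 1}"
  shows "T = id"
proof -
  interpret complex_normed_structure "\<lambda>c x. rmul x (quat_of_complex c)"
    by (rule complex_normed_structure_rmul[OF assms(1)])
  have T: "bounded_invertible T"
    by (rule bounded_invertible_of_invertible_op[OF assms(3)])
  obtain M where M: "1 \<le> M" "\<And>n x. norm ((T ^^ n) x) \<le> M * norm x"
    "\<And>n x. norm ((inv T ^^ n) x) \<le> M * norm x"
    using doubly_power_bounded_funpow[OF T assms(4)] by blast
  have "bounded_invertible (\<lambda>x. T x - rmul x (quat_of_complex l))" if "l \<noteq> 1" for l
    using bounded_invertible_shift_of_S_spectrum[OF assms(1,2)] assms(5) that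
    by (simp add: quat_of_complex_eq_qreal_1)
  moreover have "T (rmul x (quat_of_complex c)) = rmul (T x) (quat_of_complex c)" for x c
    using assms(2) unfolding bounded_right_linear_def by blast
  ultimately show ?thesis
    using doubly_power_bounded_spectrum_one_eq_id[OF T _ M] by blast
qed

end
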